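(* Let $R$ be a ring with a linear Hausdorff topology, let $I$ be a well-ordered set, and let $\{e_i\}_{i\in I}$ be a summable family of idempotents with $e_ie_j=0$ whenever $i<j$. Put $e=\sum_{i\in I}e_i$. If $r\in R$ and $n\ge 1$ is an integer with $e^nr=0$, then $e_ir=0$ for all $i\in I$; in particular $er=0$.
   Context: A linear Hausdorff topology on a ring $R$ is a ring topology on $R$ having a basis $\mathfrak U$ of neighborhoods of $0$ consisting of left ideals, with $\bigcap_{U\in\mathfrak U}U=0$. A family $\{x_i\}_{i\in I}\subseteq R$ is summable to $r\in R$ if for every $U\in\mathfrak U$ there is a finite $F'\subseteq I$ with $\sum_{i\in F}x_i-r\in U$ for every finite $F$ with $F'\subseteq F\subseteq I$; one then writes $\sum_{i\in I}x_i=r$, and the family is called summable. *)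

theory Defs
  imports Main
begin

definition left_ideal :: "'a::ring_1 set \<Rightarrow> bool" where
  "left_ideal U \<longleftrightarrow> 0 \<in> U \<and> (\<forall>x\<in>U. \<forall>y\<in>U. x + y \<in> U) \<and> (\<forall>x\<in>U. - x \<in> U)
     \<and> (\<forall>a. \<forall>x\<in>U. a * x \<in> U)"

text \<open>A family of left ideals which is a basis of neighbourhoods of 0 for a
  linear ring topology (downward directed, nonempty, right multiplication
  continuous at 0), Hausdorff (intersection is 0).\<close>
definition linear_hausdorff_basis :: "'a::ring_1 set set \<Rightarrow> bool" where
  "linear_hausdorff_basis \<U> \<longleftrightarrow>
     \<U> \<noteq> {} \<and> (\<forall>U\<in>\<U>. left_ideal U)
     \<and> (\<forall>U\<in>\<U>. \<forall>V\<in>\<U>. \<exists>W\<in>\<U>. W \<subseteq> U \<inter> V)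
     \<and> (\<forall>U\<in>\<U>. \<forall>r. \<exists>V\<in>\<U>. (\<forall>v\<in>V. v * r \<in> U))
     \<and> \<Inter>\<U> = {0}"

definition lin_has_sum :: "'a::ring_1 set set \<Rightarrow> ('i \<Rightarrow> 'a) \<Rightarrow> 'i set \<Rightarrow> 'a \<Rightarrow> bool" where
  "lin_has_sum \<U> x I r \<longleftrightarrow>
     (\<forall>U\<in>\<U>. \<exists>F'. finite F' \<and> F' \<subseteq> I \<and>
        (\<forall>F. finite F \<and> F' \<subseteq> F \<and> F \<subseteq> I \<longrightarrow> sum x F - r \<in> U))"

end

theory Submission
  imports Defs
begin

text \<open>Write \<open>s = \<Sum>\<^sub>i e\<^sub>i\<close>. Since \<open>e\<^sub>j e\<^sub>k = 0\<close> for \<open>j < k\<close>, multiplying the sum on the left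
  by \<open>e\<^sub>j\<close> only sees the indices \<open>k \<le> j\<close>; so if \<open>y\<close> is killed by all \<open>e\<^sub>k\<close> with \<open>k < j\<close>,
  then \<open>e\<^sub>j s y = e\<^sub>j y\<close>. Hence, for \<open>y\<close> killed by all \<open>e\<^sub>k\<close> with \<open>k < i\<close>, so is \<open>s y\<close>, and
  \<open>e\<^sub>i s\<^sup>m y = e\<^sub>i y\<close> for every \<open>m\<close>. By well-founded induction on \<open>i\<close> this gives
  \<open>e\<^sub>i r = e\<^sub>i s\<^sup>n r = 0\<close>, and then \<open>s r = \<Sum>\<^sub>i e\<^sub>i r = 0\<close> because limits are unique.\<close>

lemma lin_has_sum_mult_left:
  assumes "linear_hausdorff_basis \<U>" and "lin_has_sum \<U> f I c"
  shows "lin_has_sum \<U> (\<lambda>k. a * f k) I (a * c)"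
  unfolding lin_has_sum_def
proof
  fix U assume U: "U \<in> \<U>"
  with assms(2) obtain F' where F': "finite F'" "F' \<subseteq> I"
    "\<And>F. finite F \<Longrightarrow> F' \<subseteq> F \<Longrightarrow> F \<subseteq> I \<Longrightarrow> sum f F - c \<in> U"
    unfolding lin_has_sum_def by meson
  have "left_ideal U"
    using assms(1) U unfolding linear_hausdorff_basis_def by blast
  then have "a * (sum f F - c) \<in> U" if "finite F" "F' \<subseteq> F" "F \<subseteq> I" for F
    using F'(3)[OF that] unfolding left_ideal_def by blast
  then have "(\<Sum>k\<in>F. a * f k) - a * c \<in> U"
    if "finite F" "F' \<subseteq> F" "F \<subseteq> I" for F
    using that by (simp add: right_diff_distrib sum_distrib_left)
  with F' show "\<exists>F'. finite F' \<and> F' \<subseteq> I \<and>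
      (\<forall>F. finite F \<and> F' \<subseteq> F \<and> F \<subseteq> I \<longrightarrow> (\<Sum>k\<in>F. a * f k) - a * c \<in> U)"
    by auto
qed

lemma lin_has_sum_mult_right:
  assumes "linear_hausdorff_basis \<U>" and "lin_has_sum \<U> f I c"
  shows "lin_has_sum \<U> (\<lambda>k. f k * b) I (c * b)"
  unfolding lin_has_sum_def
proof
  fix U assume "U \<in> \<U>"
  with assms(1) obtain V where V: "V \<in> \<U>" "\<And>v. v \<in> V \<Longrightarrow> v * b \<in> U"
    unfolding linear_hausdorff_basis_def by meson
  with assms(2) obtain F' where F': "finite F'" "F' \<subseteq> I"
    "\<And>F. finite F \<Longrightarrow> F' \<subseteq> F \<Longrightarrow> F \<subseteq> I \<Longrightarrow> sum f F - c \<in> V"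
    unfolding lin_has_sum_def by meson
  have "(\<Sum>k\<in>F. f k * b) - c * b \<in> U" if "finite F" "F' \<subseteq> F" "F \<subseteq> I" for F
    using V(2)[OF F'(3)[OF that]] by (simp add: left_diff_distrib sum_distrib_right)
  with F' show "\<exists>F'. finite F' \<and> F' \<subseteq> I \<and>
      (\<forall>F. finite F \<and> F' \<subseteq> F \<and> F \<subseteq> I \<longrightarrow> (\<Sum>k\<in>F. f k * b) - c * b \<in> U)"
    by auto
qed

lemma lin_has_sum_finite_support:
  assumes "linear_hausdorff_basis \<U>" and "lin_has_sum \<U> f I c"
    and "finite S" "S \<subseteq> I" "\<forall>k\<in>I - S. f k = 0"
  shows "c = sum f S"
proof -
  have "sum f S - c \<in> U" if U: "U \<in> \<U>" for U
  proof -
    from assms(2) U obtain F' where F': "finite F'" "F' \<subseteq> I"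
      "\<And>F. finite F \<Longrightarrow> F' \<subseteq> F \<Longrightarrow> F \<subseteq> I \<Longrightarrow> sum f F - c \<in> U"
      unfolding lin_has_sum_def by meson
    have "sum f (F' \<union> S) - c \<in> U"
      using assms(3,4) F' by (intro F'(3)) auto
    moreover have "sum f (F' \<union> S) = sum f S"
      using assms(3-5) F'(1,2) by (intro sum.mono_neutral_right) auto
    ultimately show ?thesis by simp
  qed
  then have "sum f S - c \<in> \<Inter>\<U>" by blast
  with assms(1) show ?thesis unfolding linear_hausdorff_basis_def by simp
qed

locale lower_orthogonal_idempotent_sum =
  fixes \<U> :: "'a::ring_1 set set"
    and I :: "'i::wellorder set"
    and e :: "'i \<Rightarrow> 'a" and s :: 'a
  assumes basis: "linear_hausdorff_basis \<U>"
    and idempotent: "\<forall>i\<in>I. e i * e i = e i"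
    and orthogonal: "\<forall>i\<in>I. \<forall>j\<in>I. i < j \<longrightarrow> e i * e j = 0"
    and sums: "lin_has_sum \<U> e I s"
begin

lemma lin_has_sum_mult: "lin_has_sum \<U> (\<lambda>k. a * e k * b) I (a * s * b)"
  using lin_has_sum_mult_right[OF basis lin_has_sum_mult_left[OF basis sums]] .

lemma sum_mult_eq_0:
  assumes "\<forall>k\<in>I. e k * y = 0"
  shows "s * y = 0"
  using lin_has_sum_finite_support[OF basis lin_has_sum_mult[of 1 y], of "{}"] assms
  by simp

lemma idempotent_mult_sum_mult:
  assumes j: "j \<in> I" and below: "\<forall>k\<in>I. k < j \<longrightarrow> e k * y = 0"
  shows "e j * (s * y) = e j * y"
proof -
  have "\<forall>k\<in>I - {j}. e j * e k * y = 0"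
  proof
    fix k assume k: "k \<in> I - {j}"
    then consider "j < k" | "k < j" by (metis DiffE insertI1 neqE)
    then show "e j * e k * y = 0"
      using orthogonal below j k by cases (auto simp: mult.assoc)
  qed
  then have "e j * s * y = e j * e j * y"
    using lin_has_sum_finite_support[OF basis lin_has_sum_mult[of "e j" y], of "{j}"] j
    by simp
  with idempotent j show ?thesis by (simp add: mult.assoc)
qed

lemma annihilated_below_mult_sum:
  assumes "\<forall>k\<in>I. k < i \<longrightarrow> e k * y = 0"
  shows "\<forall>k\<in>I. k < i \<longrightarrow> e k * (s * y) = 0"
proof (intro ballI impI)
  fix k assume "k \<in> I" "k < i"
  with assms have "e k * (s * y) = e k * y"
    by (intro idempotent_mult_sum_mult) auto
  with assms \<open>k \<in> I\<close> \<open>k < i\<close> show "e k * (s * y) = 0" by simp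
qed

lemma annihilated_below_mult_power:
  assumes "\<forall>k\<in>I. k < i \<longrightarrow> e k * y = 0"
  shows "\<forall>k\<in>I. k < i \<longrightarrow> e k * (s ^ m * y) = 0"
  by (induction m) (simp_all add: assms annihilated_below_mult_sum mult.assoc)

lemma idempotent_mult_power_mult:
  assumes "i \<in> I" and "\<forall>k\<in>I. k < i \<longrightarrow> e k * y = 0"
  shows "e i * (s ^ m * y) = e i * y"
proof (induction m)
  case (Suc m)
  have "e i * (s ^ Suc m * y) = e i * (s * (s ^ m * y))"
    by (simp add: mult.assoc)
  also have "\<dots> = e i * (s ^ m * y)"
    using assms annihilated_below_mult_power by (intro idempotent_mult_sum_mult) auto
  finally show ?case using Suc.IH by simp
qed simp

lemma idempotent_mult_eq_0_if_power_mult_eq_0: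
  assumes "s ^ n * r = 0" and "i \<in> I"
  shows "e i * r = 0"
  using assms(2)
proof (induction i rule: less_induct)
  case (less i)
  then have "e i * r = e i * (s ^ n * r)"
    by (intro idempotent_mult_power_mult[symmetric]) auto
  with assms(1) show ?case by simp
qed

end

theorem lemma5:
  fixes \<U> :: "'a::ring_1 set set"
    and I :: "'i::wellorder set"
    and e :: "'i \<Rightarrow> 'a" and s r :: 'a and n :: nat
  assumes "linear_hausdorff_basis \<U>"
    and "\<forall>i\<in>I. e i * e i = e i"
    and "\<forall>i\<in>I. \<forall>j\<in>I. i < j \<longrightarrow> e i * e j = 0"
    and "lin_has_sum \<U> e I s"
    and "n \<ge> 1"
    and "s ^ n * r = 0"
  shows "(\<forall>i\<in>I. e i * r = 0) \<and> s * r = 0"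
proof -
  interpret lower_orthogonal_idempotent_sum \<U> I e s
    using assms(1-4) by unfold_locales
  have "\<forall>i\<in>I. e i * r = 0"
    using idempotent_mult_eq_0_if_power_mult_eq_0[OF assms(6)] by blast
  with sum_mult_eq_0 show ?thesis by blast
qed

end
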